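(* Let $N$ be a positive integer and $\alpha>1$ with $\alpha N\in\mathbb{N}$. Then $\mathrm{TFF}(\alpha,N)=\mathrm{TFF}(\tilde\alpha,\tilde N)$, where $1/\alpha+1/\tilde\alpha=1$ and $\tilde N=N(\alpha-1)$.
   Context: For a positive integer $N$, $\mathrm{TFF}(\alpha,N)$ is the set of weakly decreasing sequences of positive integers $(L_1,\ldots,L_K)$ such that there exist orthogonal projections $P_1,\ldots,P_K$ on $\mathbb{R}^N$ with $\operatorname{rank}P_i=L_i$ and $\sum_{i=1}^K P_i=\alpha\mathbf I$. *)

theory Defs
  imports "Jordan_Normal_Form.DL_Rank"
begin

definition orth_proj :: "nat \<Rightarrow> real mat \<Rightarrow> bool" where
  "orth_proj N P \<longleftrightarrow> P \<in> carrier_mat N N \<and> P * P = P \<and> transpose_mat P = P"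

definition TFF :: "real \<Rightarrow> nat \<Rightarrow> nat list set" where
  "TFF \<alpha> N = {L. sorted_wrt (\<ge>) L \<and> (\<forall>l\<in>set L. 0 < l) \<and>
     (\<exists>Ps :: real mat list. length Ps = length L \<and>
        (\<forall>i<length L. orth_proj N (Ps ! i) \<and> vec_space.rank N (Ps ! i) = L ! i) \<and>
        foldr (+) Ps (0\<^sub>m N N) = \<alpha> \<cdot>\<^sub>m 1\<^sub>m N)}"

end

theory Submission
  imports Defs "Jordan_Normal_Form.Gram_Schmidt"
begin

text \<open>Naimark complement. Write each projection as \<open>P\<^sub>i = U\<^sub>i U\<^sub>i\<^sup>T\<close> with
  \<open>U\<^sub>i\<^sup>T U\<^sub>i = I\<close>, and put the \<open>U\<^sub>i\<close> side by side into the \<open>N \<times> M\<close> matrix \<open>V\<close>,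
  \<open>M = \<Sum> L\<^sub>i = \<alpha>N\<close>. Then \<open>V V\<^sup>T = \<alpha>I\<close>, so \<open>V\<^sup>T V / \<alpha>\<close> is a projection of rank \<open>N\<close>
  on \<open>\<real>\<^sup>M\<close> and its complement \<open>H = I - V\<^sup>T V / \<alpha> = W\<^sup>T W\<close> has rank \<open>M - N = N'\<close>.
  The column blocks \<open>X\<^sub>i\<close> of \<open>W\<close> satisfy \<open>X\<^sub>i\<^sup>T X\<^sub>i = (1 - 1/\<alpha>) I\<close> (the diagonal blocks
  of \<open>H\<close>) and \<open>\<Sum> X\<^sub>i X\<^sub>i\<^sup>T = W W\<^sup>T = I\<close>, so the \<open>\<alpha>' X\<^sub>i X\<^sub>i\<^sup>T\<close> are projections of rank
  \<open>L\<^sub>i\<close> summing to \<open>\<alpha>' I\<close>. The relation between \<open>(\<alpha>, N)\<close> and \<open>(\<alpha>', N')\<close> is symmetric,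
  which gives the reverse inclusion.\<close>

section \<open>Traces and finite sums of matrices\<close>

definition trace_mat :: "'a :: comm_monoid_add mat \<Rightarrow> 'a" where
  "trace_mat A = (\<Sum>i<dim_row A. A $$ (i, i))"

lemma trace_mat_mult_comm:
  fixes A :: "'a :: comm_semiring_0 mat"
  assumes "A \<in> carrier_mat n m" and "B \<in> carrier_mat m n"
  shows "trace_mat (A * B) = trace_mat (B * A)"
proof -
  have "trace_mat (A * B) = (\<Sum>i<n. \<Sum>k<m. A $$ (i, k) * B $$ (k, i))"
    using assms by (simp add: trace_mat_def scalar_prod_def atLeast0LessThan)
  also have "\<dots> = (\<Sum>k<m. \<Sum>i<n. B $$ (k, i) * A $$ (i, k))"
    by (subst sum.swap) (simp add: mult.commute)
  also have "\<dots> = trace_mat (B * A)"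
    using assms by (simp add: trace_mat_def scalar_prod_def atLeast0LessThan)
  finally show ?thesis .
qed

lemma trace_mat_add:
  "A \<in> carrier_mat n n \<Longrightarrow> B \<in> carrier_mat n n \<Longrightarrow> trace_mat (A + B) = trace_mat A + trace_mat B"
  by (simp add: trace_mat_def sum.distrib)

lemma trace_mat_minus:
  fixes A :: "'a :: ab_group_add mat"
  shows "A \<in> carrier_mat n n \<Longrightarrow> B \<in> carrier_mat n n \<Longrightarrow> trace_mat (A - B) = trace_mat A - trace_mat B"
  by (simp add: trace_mat_def sum_subtractf)

lemma trace_mat_smult:
  fixes A :: "'a :: semiring_0 mat"
  shows "A \<in> carrier_mat n n \<Longrightarrow> trace_mat (c \<cdot>\<^sub>m A) = c * trace_mat A"
  by (simp add: trace_mat_def sum_distrib_left)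

lemma trace_mat_one [simp]: "trace_mat (1\<^sub>m n :: 'a :: semiring_1 mat) = of_nat n"
  by (simp add: trace_mat_def)

lemma trace_mat_zero [simp]: "trace_mat (0\<^sub>m n n :: 'a :: comm_monoid_add mat) = 0"
  by (simp add: trace_mat_def)

lemma smult_smult_mat: "a \<cdot>\<^sub>m (b \<cdot>\<^sub>m A) = (a * b) \<cdot>\<^sub>m (A :: 'a :: semigroup_mult mat)"
  by (intro eq_matI) (auto simp: mult.assoc)

lemma transpose_smult_mat: "(a \<cdot>\<^sub>m A)\<^sup>T = a \<cdot>\<^sub>m A\<^sup>T"
  by (intro eq_matI) auto

lemma assoc_mult_mat4:
  assumes "A \<in> carrier_mat n1 n2" "B \<in> carrier_mat n2 n3" "C \<in> carrier_mat n3 n4" "D \<in> carrier_mat n4 n5"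
  shows "A * B * (C * D) = A * (B * C) * (D :: 'a :: semiring_0 mat)"
  using assms by (simp add: assoc_mult_mat[of A n1 n2 _ n3 _ n5] assoc_mult_mat[of B n2 n3 C n4 D n5]
      assoc_mult_mat[of A n1 n2 "B * C" n4 D n5])

definition sum_mat_list :: "nat \<Rightarrow> nat \<Rightarrow> 'a :: monoid_add mat list \<Rightarrow> 'a mat" where
  "sum_mat_list n m As = foldr (+) As (0\<^sub>m n m)"

lemma sum_mat_list_Nil [simp]: "sum_mat_list n m [] = 0\<^sub>m n m"
  by (simp add: sum_mat_list_def)

lemma sum_mat_list_Cons [simp]: "sum_mat_list n m (A # As) = A + sum_mat_list n m As"
  by (simp add: sum_mat_list_def)

lemma dim_row_sum_mat_list [simp]: "dim_row (sum_mat_list n m As) = n"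
  by (induct As) simp_all

lemma dim_col_sum_mat_list [simp]: "dim_col (sum_mat_list n m As) = m"
  by (induct As) simp_all

lemma sum_mat_list_carrier [simp]: "sum_mat_list n m As \<in> carrier_mat n m"
  by (rule carrier_matI) simp_all

lemma sum_mat_list_index:
  assumes "set As \<subseteq> carrier_mat n m" and "i < n" and "j < m"
  shows "sum_mat_list n m As $$ (i, j) = (\<Sum>A\<leftarrow>As. A $$ (i, j))"
  using assms(1) by (induct As) (simp_all add: assms(2,3))

lemma mult_sum_mat_list:
  fixes A :: "'a :: semiring_0 mat"
  assumes "A \<in> carrier_mat k n" and "set Bs \<subseteq> carrier_mat n m"
  shows "A * sum_mat_list n m Bs = sum_mat_list k m (map ((*) A) Bs)"
  using assms(2) by (induct Bs) (use assms(1) in \<open>auto simp: mult_add_distrib_mat\<close>)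

lemma sum_mat_list_mult:
  fixes B :: "'a :: semiring_0 mat"
  assumes "B \<in> carrier_mat m k" and "set As \<subseteq> carrier_mat n m"
  shows "sum_mat_list n m As * B = sum_mat_list n k (map (\<lambda>A. A * B) As)"
  using assms(2) by (induct As) (use assms(1) in \<open>auto simp: add_mult_distrib_mat\<close>)

lemma transpose_sum_mat_list:
  assumes "set As \<subseteq> carrier_mat n m"
  shows "(sum_mat_list n m As)\<^sup>T = sum_mat_list m n (map transpose_mat As)"
  using assms by (induct As) (auto simp: transpose_add)

lemma smult_sum_mat_list:
  fixes As :: "'a :: semiring_0 mat list"
  assumes "set As \<subseteq> carrier_mat n m"
  shows "c \<cdot>\<^sub>m sum_mat_list n m As = sum_mat_list n m (map (\<lambda>A. c \<cdot>\<^sub>m A) As)"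
  using assms by (induct As) (auto simp: add_smult_distrib_left_mat)

lemma trace_sum_mat_list:
  assumes "set As \<subseteq> carrier_mat n n"
  shows "trace_mat (sum_mat_list n n As) = (\<Sum>A\<leftarrow>As. trace_mat A)"
  using assms by (induct As) (auto simp: trace_mat_add)

lemma sum_mat_list_delta:
  assumes "distinct is" and "j \<in> set is" and "A \<in> carrier_mat n m"
  shows "sum_mat_list n m (map (\<lambda>i. if i = j then A else 0\<^sub>m n m) is) = A"
proof -
  have "sum_mat_list n m (map (\<lambda>i. if i = j then A else 0\<^sub>m n m) is)
      = (if j \<in> set is then A else 0\<^sub>m n m)"
    using assms(1)
  proof (induct "is")
    case (Cons i "is")
    show ?case
    proof (cases "i = j")
      case True
      with Cons.prems have "j \<notin> set is" by auto
      with Cons True show ?thesis using assms(3) by simp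
    next
      case False
      with Cons show ?thesis using assms(3) by simp
    qed
  qed simp
  then show ?thesis
    using assms(2) by simp
qed

section \<open>Orthogonal projections\<close>

lemma (in vec_space) span_maximal_lin_indpt_subset:
  assumes T: "T \<subseteq> carrier_vec n" and max: "maximal S (\<lambda>S. S \<subseteq> T \<and> lin_indpt S)"
  shows "span S = span T"
proof
  have ST: "S \<subseteq> T" and li: "lin_indpt S"
    using max by (auto simp: maximal_def)
  then have S: "S \<subseteq> carrier_vec n"
    using T by blast
  show "span S \<subseteq> span T"
    using ST in_own_span[OF T] by (intro span_subsetI[OF T]) auto
  have "t \<in> span S" if t: "t \<in> T" for t
  proof (rule ccontr)
    assume "t \<notin> span S"
    moreover have "t \<notin> S"
      using \<open>t \<notin> span S\<close> in_own_span[OF S] by blast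
    ultimately have "lin_indpt (S \<union> {t})"
      using lin_dep_iff_in_span[OF S li] t T by auto
    then have "S = S \<union> {t}"
      using max ST t unfolding maximal_def by blast
    with \<open>t \<notin> S\<close> show False
      by blast
  qed
  then show "span T \<subseteq> span S"
    by (intro span_subsetI[OF S]) auto
qed

lemma (in vec_space) span_rescale:
  assumes us: "set us \<subseteq> carrier_vec n" and c: "\<And>u. u \<in> set us \<Longrightarrow> c u \<noteq> 0"
  shows "span (set (map (\<lambda>u. c u \<cdot>\<^sub>v u) us)) = span (set us)"
proof
  define vs where "vs = map (\<lambda>u. c u \<cdot>\<^sub>v u) us"
  have vs: "set vs \<subseteq> carrier_vec n"
    using us by (auto simp: vs_def)
  show "span (set vs) \<subseteq> span (set us)"
    using in_own_span[OF us] by (intro span_subsetI[OF us]) (auto simp: vs_def intro!: smult_in_span[OF us])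
  have "u \<in> span (set vs)" if u: "u \<in> set us" for u
  proof -
    have "c u \<cdot>\<^sub>v u \<in> set vs"
      using u by (simp add: vs_def)
    then have "c u \<cdot>\<^sub>v u \<in> span (set vs)"
      by (rule subsetD[OF in_own_span[OF vs]])
    then have "(1 / c u) \<cdot>\<^sub>v (c u \<cdot>\<^sub>v u) \<in> span (set vs)"
      by (rule smult_in_span[OF vs])
    then show ?thesis
      using c[OF u] by (simp add: smult_smult_assoc)
  qed
  then show "span (set us) \<subseteq> span (set vs)"
    by (intro span_subsetI[OF vs]) auto
qed

lemma (in vec_space) mult_fixes_col_space:
  assumes B: "B \<in> carrier_mat n n" and A: "A \<in> carrier_mat n k" and BA: "B * A = A"
    and C: "C \<in> carrier_mat n m" and cols: "set (cols C) \<subseteq> col_space A"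
  shows "B * C = C"
proof (rule mat_col_eqI)
  fix j assume "j < dim_col C"
  then have j: "j < m" and "col C j \<in> col_space A"
    using C cols by (auto simp: cols_def)
  then obtain x where x: "x \<in> carrier_vec k" and "col C j = A *\<^sub>v x"
    using col_space_eq[OF A] A by auto
  then have "B *\<^sub>v col C j = (B * A) *\<^sub>v x"
    using B A by (simp add: assoc_mult_mat_vec)
  also have "\<dots> = col C j"
    using BA \<open>col C j = A *\<^sub>v x\<close> by simp
  finally show "col (B * C) j = col C j"
    by (subst col_mult2[OF B C j])
qed (use B C in auto)

lemma cscalar_prod_real: "(v :: real vec) \<bullet>c w = v \<bullet> w"
  by (simp add: conjugate_vec_def conjugate_real_def)

context
  fixes n :: nat
begin

interpretation V: cof_vec_space n "TYPE(real)" .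

lemma orthonormal_list_exists:
  assumes ws: "set ws \<subseteq> carrier_vec n" and dist: "distinct ws" and li: "V.lin_indpt (set ws)"
  obtains vs where "length vs = length ws" and "set vs \<subseteq> carrier_vec n"
    and "\<And>i j. i < length vs \<Longrightarrow> j < length vs \<Longrightarrow> vs ! i \<bullet> vs ! j = (if i = j then 1 else 0)"
    and "V.span (set vs) = V.span (set ws)"
proof
  define us where "us = gram_schmidt n ws"
  note gs = V.gram_schmidt_result[OF ws dist li us_def]
  have us: "set us \<subseteq> carrier_vec n"
    using gs by simp
  have orth: "us ! i \<bullet> us ! j = 0 \<longleftrightarrow> i \<noteq> j" if "i < length us" "j < length us" for i j
    using corthogonalD[OF gs(2) that] by (simp add: cscalar_prod_real)
  have pos: "u \<bullet> u > 0" if "u \<in> set us" for u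
  proof -
    obtain i where "i < length us" "u = us ! i"
      using \<open>u \<in> set us\<close> by (auto simp: in_set_conv_nth)
    moreover have "u \<bullet> u \<ge> 0"
      using conjugate_square_ge_0_vec[of u] by (simp add: cscalar_prod_real)
    ultimately show ?thesis
      using orth by fastforce
  qed
  define vs where "vs = map (\<lambda>u. (1 / sqrt (u \<bullet> u)) \<cdot>\<^sub>v u) us"
  show "length vs = length ws" and "set vs \<subseteq> carrier_vec n"
    using gs us by (auto simp: vs_def)
  show "V.span (set vs) = V.span (set ws)"
    unfolding vs_def gs(1) using pos by (intro V.span_rescale[OF us]) force
  fix i j assume "i < length vs" "j < length vs"
  then have ij: "i < length us" "j < length us" and "us ! i \<in> set us" "us ! j \<in> set us"
    by (auto simp: vs_def)
  moreover have "us ! i \<in> carrier_vec n" "us ! j \<in> carrier_vec n"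
    using us ij by auto
  ultimately have "vs ! i \<bullet> vs ! j
      = (1 / sqrt (us ! i \<bullet> us ! i)) * (1 / sqrt (us ! j \<bullet> us ! j)) * (us ! i \<bullet> us ! j)"
    by (simp add: vs_def smult_scalar_prod_distrib[of _ n] scalar_prod_smult_distrib[of _ n])
  then show "vs ! i \<bullet> vs ! j = (if i = j then 1 else 0)"
    using orth[OF ij] pos[OF \<open>us ! i \<in> set us\<close>] by (auto simp: field_simps)
qed

lemma isometry_col_space_basis:
  assumes A: "A \<in> carrier_mat n k"
  obtains U where "U \<in> carrier_mat n (V.rank A)" and "U\<^sup>T * U = 1\<^sub>m (V.rank A)"
    and "V.col_space U = V.col_space A"
proof -
  have colsA: "set (cols A) \<subseteq> carrier_vec n"
    using A cols_dim by blast
  obtain S where max: "maximal S (\<lambda>T. T \<subseteq> set (cols A) \<and> V.lin_indpt T)"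
    using maximal_exists[of "\<lambda>T. T \<subseteq> set (cols A) \<and> V.lin_indpt T" "card (set (cols A))" "{}"]
    by (meson List.finite_set card_mono empty_iff empty_subsetI V.finite_lin_indpt2 rev_finite_subset)
  have rank: "V.rank A = card S"
    by (rule V.rank_card_indpt[OF A max])
  have SA: "S \<subseteq> set (cols A)" and li: "V.lin_indpt S"
    using max by (auto simp: maximal_def)
  obtain ws where ws: "set ws = S" "distinct ws"
    using finite_distinct_list[OF finite_subset[OF SA]] by blast
  obtain vs where len: "length vs = length ws" and vs: "set vs \<subseteq> carrier_vec n"
    and orthonormal: "\<And>i j. i < length vs \<Longrightarrow> j < length vs \<Longrightarrow> vs ! i \<bullet> vs ! j = (if i = j then 1 else 0)"
    and span: "V.span (set vs) = V.span S"
    using orthonormal_list_exists[of ws] ws SA colsA li by auto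
  have r: "length vs = V.rank A"
    using len rank ws distinct_card by metis
  show thesis
  proof
    show U: "mat_of_cols n vs \<in> carrier_mat n (V.rank A)"
      using r by auto
    show "(mat_of_cols n vs)\<^sup>T * mat_of_cols n vs = 1\<^sub>m (V.rank A)"
      using orthonormal r nth_mem[THEN subsetD[OF vs]] by (intro eq_matI) auto
    have "V.col_space (mat_of_cols n vs) = V.span S"
      using vs span by (simp add: V.col_space_def)
    also have "\<dots> = V.col_space A"
      unfolding V.col_space_def by (rule V.span_maximal_lin_indpt_subset[OF colsA max])
    finally show "V.col_space (mat_of_cols n vs) = V.col_space A" .
  qed
qed

lemma orth_proj_factor:
  assumes "orth_proj n P"
  obtains U where "U \<in> carrier_mat n (V.rank P)" and "U\<^sup>T * U = 1\<^sub>m (V.rank P)"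
    and "U * U\<^sup>T = P"
proof -
  have P: "P \<in> carrier_mat n n" and PP: "P * P = P" and PT: "P\<^sup>T = P"
    using assms by (auto simp: orth_proj_def)
  obtain U where U: "U \<in> carrier_mat n (V.rank P)" and UTU: "U\<^sup>T * U = 1\<^sub>m (V.rank P)"
    and col_space: "V.col_space U = V.col_space P"
    using isometry_col_space_basis[OF P] by blast
  have UUT: "U * U\<^sup>T \<in> carrier_mat n n"
    using U by auto
  have cols_in_col_space: "set (cols A) \<subseteq> V.col_space A" if "A \<in> carrier_mat n m" for A m
    unfolding V.col_space_def using that by (intro V.in_own_span) (auto simp: cols_def)
  have PU: "P * U = U"
    using V.mult_fixes_col_space[OF P P PP U] cols_in_col_space[OF U] col_space by simp
  have "U * U\<^sup>T * U = U"
    using U UTU by (simp add: assoc_mult_mat[of U n _ "U\<^sup>T" _ U])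
  then have UUTP: "U * U\<^sup>T * P = P"
    using V.mult_fixes_col_space[OF UUT U _ P] cols_in_col_space[OF P] col_space by simp
  have "P = (U * U\<^sup>T * P)\<^sup>T"
    using UUTP PT by simp
  also have "\<dots> = P\<^sup>T * (U * U\<^sup>T)\<^sup>T"
    by (rule transpose_mult[OF UUT P])
  also have "\<dots> = P * (U * U\<^sup>T)"
    using U PT by (simp add: transpose_mult[of U n _ "U\<^sup>T"])
  also have "\<dots> = U * U\<^sup>T"
    using PU P U by (simp add: assoc_mult_mat[of P n n U _ "U\<^sup>T", symmetric])
  finally show thesis
    using that U UTU by simp
qed

end

lemma trace_orth_proj:
  assumes "orth_proj n P"
  shows "trace_mat P = real (vec_space.rank n P)"
proof -
  obtain U where U: "U \<in> carrier_mat n (vec_space.rank n P)"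
    and "U\<^sup>T * U = 1\<^sub>m (vec_space.rank n P)" and "U * U\<^sup>T = P"
    using orth_proj_factor[OF assms] .
  then show ?thesis
    using trace_mat_mult_comm[OF U, of "U\<^sup>T"] by simp
qed

lemma orth_proj_smult_gram:
  fixes X :: "real mat"
  assumes X: "X \<in> carrier_mat r l" and XTX: "X\<^sup>T * X = d \<cdot>\<^sub>m 1\<^sub>m l" and cd: "c * d = 1"
  shows "orth_proj r (c \<cdot>\<^sub>m (X * X\<^sup>T))" and "vec_space.rank r (c \<cdot>\<^sub>m (X * X\<^sup>T)) = l"
proof -
  have XT: "X\<^sup>T \<in> carrier_mat l r"
    using X by simp
  have G: "X * X\<^sup>T \<in> carrier_mat r r"
    using X by simp
  have "X * X\<^sup>T * (X * X\<^sup>T) = X * (X\<^sup>T * X) * X\<^sup>T"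
    using X XT by (simp add: assoc_mult_mat[of _ r l _ r _ r] assoc_mult_mat[of X r l _ l _ r])
  also have "\<dots> = d \<cdot>\<^sub>m (X * X\<^sup>T)"
    using X XTX by (simp add: mult_smult_distrib[OF X one_carrier_mat] mult_smult_assoc_mat[OF X XT])
  finally have GG: "X * X\<^sup>T * (X * X\<^sup>T) = d \<cdot>\<^sub>m (X * X\<^sup>T)" .
  have "c \<cdot>\<^sub>m (X * X\<^sup>T) * (c \<cdot>\<^sub>m (X * X\<^sup>T)) = (c * c * d) \<cdot>\<^sub>m (X * X\<^sup>T)"
    using GG by (simp add: mult_smult_assoc_mat[OF G smult_carrier_mat[OF G]] mult_smult_distrib[OF G G]
        smult_smult_mat mult.assoc)
  then have idem: "c \<cdot>\<^sub>m (X * X\<^sup>T) * (c \<cdot>\<^sub>m (X * X\<^sup>T)) = c \<cdot>\<^sub>m (X * X\<^sup>T)"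
    using cd by (simp add: mult.assoc)
  show proj: "orth_proj r (c \<cdot>\<^sub>m (X * X\<^sup>T))"
    unfolding orth_proj_def using X idem by (simp add: transpose_smult_mat transpose_mult[OF X XT])
  have "trace_mat (c \<cdot>\<^sub>m (X * X\<^sup>T)) = c * trace_mat (X\<^sup>T * X)"
    using X by (simp add: trace_mat_smult[of _ r] trace_mat_mult_comm[OF X XT])
  also have "\<dots> = real l"
    using XTX cd by (simp add: trace_mat_smult[of _ l] mult.assoc[symmetric])
  finally show "vec_space.rank r (c \<cdot>\<^sub>m (X * X\<^sup>T)) = l"
    using trace_orth_proj[OF proj] by simp
qed

lemma orth_proj_one_minus:
  assumes "orth_proj n P"
  shows "orth_proj n (1\<^sub>m n - P)"
proof -
  have P: "P \<in> carrier_mat n n" and PP: "P * P = P" and PT: "P\<^sup>T = P"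
    using assms by (auto simp: orth_proj_def)
  have "(1\<^sub>m n - P) * P = 1\<^sub>m n * P - P * P"
    using P by (intro minus_mult_distrib_mat) auto
  then have QP: "(1\<^sub>m n - P) * P = 0\<^sub>m n n"
    using P PP by simp
  have "(1\<^sub>m n - P) * (1\<^sub>m n - P) = (1\<^sub>m n - P) * 1\<^sub>m n - (1\<^sub>m n - P) * P"
    using P by (intro mult_minus_distrib_mat) auto
  also have "\<dots> = 1\<^sub>m n - P"
    using P QP by (intro eq_matI) auto
  finally show ?thesis
    using P PT by (simp add: orth_proj_def transpose_minus[of _ n n] minus_carrier_mat)
qed

lemma orth_proj_tight_complement:
  fixes V :: "real mat"
  assumes V: "V \<in> carrier_mat n m" and tight: "V * V\<^sup>T = \<alpha> \<cdot>\<^sub>m 1\<^sub>m n" and \<alpha>: "\<alpha> \<noteq> 0"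
  shows "orth_proj m (1\<^sub>m m - (1 / \<alpha>) \<cdot>\<^sub>m (V\<^sup>T * V))"
    and "trace_mat (1\<^sub>m m - (1 / \<alpha>) \<cdot>\<^sub>m (V\<^sup>T * V)) = real m - real n"
proof -
  have VT: "V\<^sup>T \<in> carrier_mat m n"
    using V by simp
  have "V\<^sup>T\<^sup>T * V\<^sup>T = \<alpha> \<cdot>\<^sub>m 1\<^sub>m n"
    using tight by simp
  note G = orth_proj_smult_gram[OF VT this, of "1 / \<alpha>"]
  have P: "orth_proj m ((1 / \<alpha>) \<cdot>\<^sub>m (V\<^sup>T * V))"
    and rank: "vec_space.rank m ((1 / \<alpha>) \<cdot>\<^sub>m (V\<^sup>T * V)) = n"
    using G \<alpha> by simp_all
  show "orth_proj m (1\<^sub>m m - (1 / \<alpha>) \<cdot>\<^sub>m (V\<^sup>T * V))"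
    by (rule orth_proj_one_minus[OF P])
  show "trace_mat (1\<^sub>m m - (1 / \<alpha>) \<cdot>\<^sub>m (V\<^sup>T * V)) = real m - real n"
    using trace_orth_proj[OF P] rank V by (simp add: trace_mat_minus[of _ m])
qed

section \<open>Block decomposition of \<open>\<real>\<^sup>M\<close>\<close>

lemma sum_list_take_mono:
  fixes L :: "nat list"
  assumes "i \<le> j"
  shows "sum_list (take i L) \<le> sum_list (take j L)"
proof -
  have "take j L = take i L @ take (j - i) (drop i L)"
    using assms by (metis le_add_diff_inverse take_add)
  then show ?thesis
    by simp
qed

lemma sum_list_take_Suc:
  "i < length L \<Longrightarrow> sum_list (take (Suc i) L) = sum_list (take i L) + L ! i"
  by (simp add: take_Suc_conv_app_nth)

lemma card_blocks_containing:
  fixes L :: "nat list"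
  shows "(\<Sum>i<K. if sum_list (take i L) \<le> a \<and> a < sum_list (take (Suc i) L) then 1 else 0 :: 'a :: semiring_1)
    = (if a < sum_list (take K L) then 1 else 0)"
proof (induct K)
  case (Suc K)
  then show ?case
    using sum_list_take_mono[of K "Suc K" L] by auto
qed simp

text \<open>For \<open>M = L\<^sub>0 + \<dots> + L\<^sub>K\<^sub>-\<^sub>1\<close>, the \<open>L\<^sub>i \<times> M\<close> matrix reading off the \<open>i\<close>-th block of
  coordinates; its transpose is the embedding of that block.\<close>
definition block_selector :: "nat list \<Rightarrow> nat \<Rightarrow> 'a :: semiring_1 mat" where
  "block_selector L i = mat (L ! i) (sum_list L) (\<lambda>(k, a). if a = sum_list (take i L) + k then 1 else 0)"

lemma block_selector_carrier [simp]: "block_selector L i \<in> carrier_mat (L ! i) (sum_list L)"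
  by (simp add: block_selector_def)

lemma block_selector_gram_carrier [simp]:
  "(block_selector L i)\<^sup>T * block_selector L i \<in> carrier_mat (sum_list L) (sum_list L)"
  by (rule mult_carrier_mat[of _ _ "L ! i"]) simp_all

lemma block_selector_mult_transpose:
  assumes i: "i < length L" and j: "j < length L"
  shows "(block_selector L i :: 'a :: semiring_1 mat) * (block_selector L j)\<^sup>T
    = (if i = j then 1\<^sub>m (L ! i) else 0\<^sub>m (L ! i) (L ! j))"
proof (rule eq_matI)
  fix k l assume "k < dim_row (if i = j then 1\<^sub>m (L ! i) else 0\<^sub>m (L ! i) (L ! j) :: 'a mat)"
    and "l < dim_col (if i = j then 1\<^sub>m (L ! i) else 0\<^sub>m (L ! i) (L ! j) :: 'a mat)"
  then have k: "k < L ! i" and l: "l < L ! j"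
    by (auto split: if_splits)
  let ?o = "\<lambda>i. sum_list (take i L)"
  have "(block_selector L i * (block_selector L j)\<^sup>T) $$ (k, l)
      = (\<Sum>a<sum_list L. (if a = ?o i + k then 1 else 0) * (if a = ?o j + l then 1 else 0 :: 'a))"
    using k l by (simp add: block_selector_def scalar_prod_def atLeast0LessThan)
  also have "\<dots> = (if ?o i + k = ?o j + l \<and> ?o i + k < sum_list L then 1 else 0)"
    by (simp add: if_distrib[of "\<lambda>x. x * _"] sum.delta cong: if_cong)
  also have "\<dots> = (if i = j then 1\<^sub>m (L ! i) else 0\<^sub>m (L ! i) (L ! j)) $$ (k, l)"
  proof -
    have end_i: "?o i + L ! i \<le> sum_list L"
      using sum_list_take_mono[of "Suc i" "length L" L] i by (simp add: sum_list_take_Suc)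
    have "?o i + k \<noteq> ?o j + l" if "i < j"
      using sum_list_take_mono[of "Suc i" j L] sum_list_take_Suc[OF i] that k by simp
    moreover have "?o i + k \<noteq> ?o j + l" if "j < i"
      using sum_list_take_mono[of "Suc j" i L] sum_list_take_Suc[OF j] that l by simp
    ultimately show ?thesis
      using k l end_i by (cases i j rule: linorder_cases) auto
  qed
  finally show "(block_selector L i * (block_selector L j)\<^sup>T :: 'a mat) $$ (k, l)
      = (if i = j then 1\<^sub>m (L ! i) else 0\<^sub>m (L ! i) (L ! j)) $$ (k, l)" .
qed (simp_all add: block_selector_def)

lemma sum_block_selector_gram:
  "sum_mat_list (sum_list L) (sum_list L)
     (map (\<lambda>i. (block_selector L i)\<^sup>T * (block_selector L i :: 'a :: semiring_1 mat)) [0..<length L])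
   = 1\<^sub>m (sum_list L)"
  (is "sum_mat_list ?M ?M ?Gs = _")
proof (rule eq_matI)
  let ?o = "\<lambda>i. sum_list (take i L)"
  fix a b assume "a < dim_row (1\<^sub>m ?M :: 'a mat)" "b < dim_col (1\<^sub>m ?M :: 'a mat)"
  then have a: "a < ?M" and b: "b < ?M"
    by auto
  have "sum_mat_list ?M ?M ?Gs $$ (a, b)
      = (\<Sum>i<length L. ((block_selector L i)\<^sup>T * block_selector L i) $$ (a, b))"
    using a b by (subst sum_mat_list_index[of _ ?M ?M])
      (auto simp: o_def sum_set_upt_conv_sum_list_nat[symmetric] atLeast0LessThan)
  also have "\<dots> = (\<Sum>i<length L. if a = b then
      (if ?o i \<le> a \<and> a < ?o (Suc i) then 1 else 0) else 0)"
  proof (rule sum.cong)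
    fix i assume "i \<in> {..<length L}"
    then have o_Suc: "?o (Suc i) = ?o i + L ! i"
      by (simp add: sum_list_take_Suc)
    have "((block_selector L i)\<^sup>T * block_selector L i) $$ (a, b)
        = (\<Sum>k<L ! i. (if a = ?o i + k then 1 else 0) * (if b = ?o i + k then 1 else 0 :: 'a))"
      using a b by (simp add: block_selector_def scalar_prod_def atLeast0LessThan)
    also have "\<dots> = (\<Sum>k<L ! i. if k = a - ?o i then (if a = b \<and> ?o i \<le> a then 1 else 0) else 0)"
      by (rule sum.cong) auto
    also have "\<dots> = (if a = b then (if ?o i \<le> a \<and> a < ?o (Suc i) then 1 else 0) else 0)"
      using o_Suc by auto
    finally show "((block_selector L i)\<^sup>T * block_selector L i :: 'a mat) $$ (a, b)
        = (if a = b then (if ?o i \<le> a \<and> a < ?o (Suc i) then 1 else 0) else 0)" .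
  qed simp
  also have "\<dots> = 1\<^sub>m ?M $$ (a, b)"
    using a b card_blocks_containing[where K="length L" and L=L and a=a] by (cases "a = b") simp_all
  finally show "sum_mat_list ?M ?M ?Gs $$ (a, b) = 1\<^sub>m ?M $$ (a, b)" .
qed simp_all

text \<open>The \<open>n \<times> M\<close> block matrix \<open>[U\<^sub>0 | \<dots> | U\<^sub>K\<^sub>-\<^sub>1]\<close>.\<close>
definition block_row_mat :: "nat \<Rightarrow> nat list \<Rightarrow> (nat \<Rightarrow> 'a :: comm_semiring_1 mat) \<Rightarrow> 'a mat" where
  "block_row_mat n L U = sum_mat_list n (sum_list L) (map (\<lambda>i. U i * block_selector L i) [0..<length L])"

lemma block_row_mat_mult_selector:
  assumes U: "\<And>i. i < length L \<Longrightarrow> U i \<in> carrier_mat n (L ! i)" and j: "j < length L"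
  shows "block_row_mat n L U * (block_selector L j)\<^sup>T = U j"
proof -
  have UR: "U i * block_selector L i \<in> carrier_mat n (sum_list L)" if "i < length L" for i
    using U[OF that] block_selector_carrier by (rule mult_carrier_mat)
  have "block_row_mat n L U * (block_selector L j)\<^sup>T
      = sum_mat_list n (L ! j) (map (\<lambda>i. U i * block_selector L i * (block_selector L j)\<^sup>T) [0..<length L])"
    unfolding block_row_mat_def using UR
    by (subst sum_mat_list_mult[of _ "sum_list L"]) (auto simp: o_def)
  also have "\<dots> = sum_mat_list n (L ! j) (map (\<lambda>i. if i = j then U j else 0\<^sub>m n (L ! j)) [0..<length L])"
  proof (intro arg_cong[where f = "sum_mat_list n (L ! j)"] map_cong refl)
    fix i assume "i \<in> set [0..<length L]"
    then have i: "i < length L"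
      by simp
    then have "U i * block_selector L i * (block_selector L j)\<^sup>T
        = U i * (if i = j then 1\<^sub>m (L ! i) else 0\<^sub>m (L ! i) (L ! j))"
      using assoc_mult_mat[OF U[OF i] block_selector_carrier, of "(block_selector L j)\<^sup>T" "L ! j"]
      by (simp add: block_selector_mult_transpose[OF i j])
    then show "U i * block_selector L i * (block_selector L j)\<^sup>T = (if i = j then U j else 0\<^sub>m n (L ! j))"
      using U[OF i] by auto
  qed
  also have "\<dots> = U j"
    using U[OF j] j by (intro sum_mat_list_delta) auto
  finally show ?thesis .
qed

lemma block_row_mat_mult_transpose:
  assumes U: "\<And>i. i < length L \<Longrightarrow> U i \<in> carrier_mat n (L ! i)"
  shows "block_row_mat n L U * (block_row_mat n L U)\<^sup>T
    = sum_mat_list n n (map (\<lambda>i. U i * (U i)\<^sup>T) [0..<length L])"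
proof -
  let ?V = "block_row_mat n L U"
  have V: "?V \<in> carrier_mat n (sum_list L)"
    by (simp add: block_row_mat_def)
  have UR: "U i * block_selector L i \<in> carrier_mat n (sum_list L)" if "i < length L" for i
    using U[OF that] block_selector_carrier by (rule mult_carrier_mat)
  have "?V\<^sup>T = sum_mat_list (sum_list L) n (map (\<lambda>i. (U i * block_selector L i)\<^sup>T) [0..<length L])"
    unfolding block_row_mat_def using UR by (subst transpose_sum_mat_list[of _ n]) (auto simp: o_def)
  also have "\<dots> = sum_mat_list (sum_list L) n (map (\<lambda>i. (block_selector L i)\<^sup>T * (U i)\<^sup>T) [0..<length L])"
    by (intro arg_cong[where f = "sum_mat_list (sum_list L) n"] map_cong refl)
      (simp add: transpose_mult[OF U block_selector_carrier])
  finally have "?V * ?V\<^sup>T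
      = ?V * sum_mat_list (sum_list L) n (map (\<lambda>i. (block_selector L i)\<^sup>T * (U i)\<^sup>T) [0..<length L])"
    by simp
  also have "\<dots> = sum_mat_list n n (map (\<lambda>i. ?V * ((block_selector L i)\<^sup>T * (U i)\<^sup>T)) [0..<length L])"
  proof -
    have "(block_selector L i)\<^sup>T * (U i)\<^sup>T \<in> carrier_mat (sum_list L) n" if "i < length L" for i
      using U[OF that] by (intro mult_carrier_mat[of _ _ "L ! i"]) simp_all
    then show ?thesis
      by (subst mult_sum_mat_list[OF V]) (auto simp: o_def)
  qed
  also have "\<dots> = sum_mat_list n n (map (\<lambda>i. U i * (U i)\<^sup>T) [0..<length L])"
  proof (intro arg_cong[where f = "sum_mat_list n n"] map_cong refl)
    fix i assume "i \<in> set [0..<length L]"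
    then have i: "i < length L"
      by simp
    have "?V * ((block_selector L i)\<^sup>T * (U i)\<^sup>T) = ?V * (block_selector L i)\<^sup>T * (U i)\<^sup>T"
      using V U[OF i] by (simp add: assoc_mult_mat[of _ n "sum_list L" _ "L ! i" _ n])
    then show "?V * ((block_selector L i)\<^sup>T * (U i)\<^sup>T) = U i * (U i)\<^sup>T"
      using block_row_mat_mult_selector[OF U i] by simp
  qed
  finally show ?thesis .
qed

lemma block_selector_sandwich_gram:
  fixes U :: "nat \<Rightarrow> 'a :: comm_semiring_1 mat"
  assumes U: "\<And>i. i < length L \<Longrightarrow> U i \<in> carrier_mat n (L ! i)" and i: "i < length L"
  shows "block_selector L i * ((block_row_mat n L U)\<^sup>T * block_row_mat n L U) * (block_selector L i)\<^sup>T
    = (U i)\<^sup>T * U i"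
proof -
  let ?V = "block_row_mat n L U" and ?R = "block_selector L i :: 'a mat"
  have V: "?V \<in> carrier_mat n (sum_list L)"
    by (simp add: block_row_mat_def)
  have R: "?R \<in> carrier_mat (L ! i) (sum_list L)"
    by simp
  have RT: "?R\<^sup>T \<in> carrier_mat (sum_list L) (L ! i)" and VT: "?V\<^sup>T \<in> carrier_mat (sum_list L) n"
    using V by simp_all
  have "(U i)\<^sup>T * U i = (?V * ?R\<^sup>T)\<^sup>T * (?V * ?R\<^sup>T)"
    using block_row_mat_mult_selector[OF U i] by simp
  also have "\<dots> = ?R * ?V\<^sup>T * (?V * ?R\<^sup>T)"
    using transpose_mult[OF V RT] by simp
  also have "\<dots> = ?R * (?V\<^sup>T * ?V) * ?R\<^sup>T"
    by (rule assoc_mult_mat4[OF R VT V RT])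
  finally show ?thesis ..
qed

lemma sum_block_selector_sandwich:
  fixes A :: "'a :: comm_semiring_1 mat"
  assumes A: "A \<in> carrier_mat k (sum_list L)" and B: "B \<in> carrier_mat (sum_list L) m"
  shows "sum_mat_list k m
      (map (\<lambda>i. A * ((block_selector L i)\<^sup>T * block_selector L i) * B) [0..<length L]) = A * B"
proof -
  let ?M = "sum_list L"
  let ?Gs = "map (\<lambda>i. (block_selector L i)\<^sup>T * (block_selector L i :: 'a mat)) [0..<length L]"
  have Gs: "set ?Gs \<subseteq> carrier_mat ?M ?M"
    by auto
  have "A * B = A * sum_mat_list ?M ?M ?Gs * B"
    using A by (simp add: sum_block_selector_gram)
  also have "\<dots> = sum_mat_list k ?M (map ((*) A) ?Gs) * B"
    by (simp add: mult_sum_mat_list[OF A Gs])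
  also have "\<dots> = sum_mat_list k m (map (\<lambda>C. C * B) (map ((*) A) ?Gs))"
    using A Gs by (intro sum_mat_list_mult[OF B]) auto
  finally show ?thesis
    by (simp add: o_def)
qed

section \<open>The Naimark complement\<close>

lemma sum_list_eq_tight_trace:
  fixes U :: "nat \<Rightarrow> real mat"
  assumes U: "\<And>i. i < length L \<Longrightarrow> U i \<in> carrier_mat n (L ! i)"
    and isometry: "\<And>i. i < length L \<Longrightarrow> (U i)\<^sup>T * U i = 1\<^sub>m (L ! i)"
    and tight: "sum_mat_list n n (map (\<lambda>i. U i * (U i)\<^sup>T) [0..<length L]) = \<alpha> \<cdot>\<^sub>m 1\<^sub>m n"
  shows "real (sum_list L) = \<alpha> * real n"
proof -
  have "\<alpha> * real n = trace_mat (sum_mat_list n n (map (\<lambda>i. U i * (U i)\<^sup>T) [0..<length L]))"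
    by (simp add: tight trace_mat_smult[of _ n])
  also have "\<dots> = (\<Sum>i\<leftarrow>[0..<length L]. trace_mat (U i * (U i)\<^sup>T))"
  proof -
    have "U i * (U i)\<^sup>T \<in> carrier_mat n n" if "i < length L" for i
      using U[OF that] by (intro mult_carrier_mat[of _ _ "L ! i"]) simp_all
    then show ?thesis
      by (subst trace_sum_mat_list) (auto simp: o_def)
  qed
  also have "\<dots> = (\<Sum>i\<leftarrow>[0..<length L]. trace_mat ((U i)\<^sup>T * U i))"
    using U by (intro arg_cong[where f = sum_list] map_cong refl) (simp add: trace_mat_mult_comm[OF U])
  also have "\<dots> = real (sum_list L)"
    using isometry by (simp add: sum_list_sum_nth atLeast0LessThan cong: map_cong)
  finally show ?thesis ..
qed

lemma block_selector_sandwich_complement: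
  fixes U :: "nat \<Rightarrow> real mat"
  assumes U: "\<And>i. i < length L \<Longrightarrow> U i \<in> carrier_mat n (L ! i)"
    and isometry: "\<And>i. i < length L \<Longrightarrow> (U i)\<^sup>T * U i = 1\<^sub>m (L ! i)" and i: "i < length L"
  shows "block_selector L i * (1\<^sub>m (sum_list L) - c \<cdot>\<^sub>m ((block_row_mat n L U)\<^sup>T * block_row_mat n L U))
      * (block_selector L i)\<^sup>T = (1 - c) \<cdot>\<^sub>m 1\<^sub>m (L ! i)"
proof -
  let ?M = "sum_list L" and ?R = "block_selector L i :: real mat" and ?G = "(block_row_mat n L U)\<^sup>T * block_row_mat n L U"
  have G: "?G \<in> carrier_mat ?M ?M" and R: "?R \<in> carrier_mat (L ! i) ?M"
    and RT: "?R\<^sup>T \<in> carrier_mat ?M (L ! i)" and RG: "?R * ?G \<in> carrier_mat (L ! i) ?M"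
    by (auto simp: block_row_mat_def intro!: mult_carrier_mat)
  have "?R * (1\<^sub>m ?M - c \<cdot>\<^sub>m ?G) = ?R - c \<cdot>\<^sub>m (?R * ?G)"
    by (simp add: mult_minus_distrib_mat[OF R one_carrier_mat smult_carrier_mat[OF G]]
        mult_smult_distrib[OF R G] right_mult_one_mat[OF R])
  then have "?R * (1\<^sub>m ?M - c \<cdot>\<^sub>m ?G) * ?R\<^sup>T = ?R * ?R\<^sup>T - c \<cdot>\<^sub>m (?R * ?G * ?R\<^sup>T)"
    by (simp add: minus_mult_distrib_mat[OF R smult_carrier_mat[OF RG] RT] mult_smult_assoc_mat[OF RG RT])
  also have "\<dots> = 1\<^sub>m (L ! i) - c \<cdot>\<^sub>m 1\<^sub>m (L ! i)"
    using block_selector_sandwich_gram[OF U i] isometry[OF i]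
      block_selector_mult_transpose[OF i i, where 'a = real] by simp
  also have "\<dots> = (1 - c) \<cdot>\<^sub>m 1\<^sub>m (L ! i)"
    by (intro eq_matI) auto
  finally show ?thesis .
qed

lemma naimark_complement:
  fixes U :: "nat \<Rightarrow> real mat"
  assumes U: "\<And>i. i < length L \<Longrightarrow> U i \<in> carrier_mat n (L ! i)"
    and isometry: "\<And>i. i < length L \<Longrightarrow> (U i)\<^sup>T * U i = 1\<^sub>m (L ! i)"
    and tight: "sum_mat_list n n (map (\<lambda>i. U i * (U i)\<^sup>T) [0..<length L]) = \<alpha> \<cdot>\<^sub>m 1\<^sub>m n"
    and \<alpha>: "\<alpha> \<noteq> 0"
  obtains r X where "real r = (\<alpha> - 1) * real n"
    and "\<And>i. i < length L \<Longrightarrow> X i \<in> carrier_mat r (L ! i)"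
    and "\<And>i. i < length L \<Longrightarrow> (X i)\<^sup>T * X i = (1 - 1 / \<alpha>) \<cdot>\<^sub>m 1\<^sub>m (L ! i)"
    and "sum_mat_list r r (map (\<lambda>i. X i * (X i)\<^sup>T) [0..<length L]) = 1\<^sub>m r"
proof -
  let ?M = "sum_list L" and ?R = "block_selector L :: nat \<Rightarrow> real mat"
  define V where "V = block_row_mat n L U"
  define H where "H = 1\<^sub>m ?M - (1 / \<alpha>) \<cdot>\<^sub>m (V\<^sup>T * V)"
  define r where "r = vec_space.rank ?M H"
  have V: "V \<in> carrier_mat n ?M"
    by (simp add: V_def block_row_mat_def)
  have "V * V\<^sup>T = \<alpha> \<cdot>\<^sub>m 1\<^sub>m n"
    using block_row_mat_mult_transpose[OF U] tight by (simp add: V_def)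
  note complement = orth_proj_tight_complement[OF V this \<alpha>, folded H_def]
  obtain W where W: "W \<in> carrier_mat ?M r" and WTW: "W\<^sup>T * W = 1\<^sub>m r" and WWT: "W * W\<^sup>T = H"
    using orth_proj_factor[OF complement(1)] unfolding r_def .
  have "real r = trace_mat H"
    using trace_orth_proj[OF complement(1)] by (simp add: r_def)
  then have "real r = (\<alpha> - 1) * real n"
    using complement(2) sum_list_eq_tight_trace[OF U isometry tight] by (simp add: algebra_simps)
  then show thesis
  proof
    fix i assume i: "i < length L"
    show "W\<^sup>T * (?R i)\<^sup>T \<in> carrier_mat r (L ! i)"
      using W by simp
    have "(W\<^sup>T * (?R i)\<^sup>T)\<^sup>T * (W\<^sup>T * (?R i)\<^sup>T) = ?R i * W * (W\<^sup>T * (?R i)\<^sup>T)"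
      using W by (simp add: transpose_mult[of _ r ?M _ "L ! i"])
    also have "\<dots> = ?R i * H * (?R i)\<^sup>T"
      using W by (simp add: assoc_mult_mat4[of _ "L ! i" ?M _ r _ ?M _ "L ! i"] WWT)
    also have "\<dots> = (1 - 1 / \<alpha>) \<cdot>\<^sub>m 1\<^sub>m (L ! i)"
      unfolding H_def V_def by (rule block_selector_sandwich_complement[OF U isometry i])
    finally show "(W\<^sup>T * (?R i)\<^sup>T)\<^sup>T * (W\<^sup>T * (?R i)\<^sup>T) = (1 - 1 / \<alpha>) \<cdot>\<^sub>m 1\<^sub>m (L ! i)" .
  next
    have "W\<^sup>T * (?R i)\<^sup>T * (W\<^sup>T * (?R i)\<^sup>T)\<^sup>T = W\<^sup>T * ((?R i)\<^sup>T * ?R i) * W" for i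
    proof -
      have "(W\<^sup>T * (?R i)\<^sup>T)\<^sup>T = ?R i * W"
        using transpose_mult[of "W\<^sup>T" r ?M "(?R i)\<^sup>T" "L ! i"] W by simp
      then show ?thesis
        using assoc_mult_mat4[of "W\<^sup>T" r ?M "(?R i)\<^sup>T" "L ! i" "?R i" ?M W r] W by simp
    qed
    then show "sum_mat_list r r (map (\<lambda>i. W\<^sup>T * (?R i)\<^sup>T * (W\<^sup>T * (?R i)\<^sup>T)\<^sup>T) [0..<length L]) = 1\<^sub>m r"
      using sum_block_selector_sandwich[of "W\<^sup>T" r L W r] W WTW by simp
  qed
qed

section \<open>Duality of tight fusion frames\<close>

lemma conjugate_exponent:
  fixes \<alpha> \<alpha>' :: real
  assumes "\<alpha> > 1" and "1 / \<alpha> + 1 / \<alpha>' = 1"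
  shows "\<alpha>' > 1" and "(\<alpha> - 1) * (\<alpha>' - 1) = 1"
proof -
  have "1 / \<alpha>' = (\<alpha> - 1) / \<alpha>"
    using assms by (simp add: field_simps)
  then have \<alpha>': "\<alpha>' = \<alpha> / (\<alpha> - 1)"
    by (metis divide_divide_eq_right div_by_1 divide_divide_eq_left' inverse_divide inverse_eq_divide)
  show "\<alpha>' > 1" and "(\<alpha> - 1) * (\<alpha>' - 1) = 1"
    unfolding \<alpha>' using assms(1) by (simp_all add: field_simps)
qed

lemma TFF_isometries:
  assumes "L \<in> TFF \<alpha> N"
  obtains U where "\<And>i. i < length L \<Longrightarrow> U i \<in> carrier_mat N (L ! i)"
    and "\<And>i. i < length L \<Longrightarrow> (U i)\<^sup>T * U i = 1\<^sub>m (L ! i)"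
    and "sum_mat_list N N (map (\<lambda>i. U i * (U i)\<^sup>T) [0..<length L]) = \<alpha> \<cdot>\<^sub>m 1\<^sub>m N"
proof -
  obtain Ps where len: "length Ps = length L"
    and proj: "\<And>i. i < length L \<Longrightarrow> orth_proj N (Ps ! i) \<and> vec_space.rank N (Ps ! i) = L ! i"
    and sum: "foldr (+) Ps (0\<^sub>m N N) = \<alpha> \<cdot>\<^sub>m 1\<^sub>m N"
    using assms unfolding TFF_def by blast
  have "\<forall>i<length L. \<exists>U. U \<in> carrier_mat N (L ! i) \<and> U\<^sup>T * U = 1\<^sub>m (L ! i) \<and> U * U\<^sup>T = Ps ! i"
  proof (intro allI impI)
    fix i assume "i < length L"
    with proj obtain U where "U \<in> carrier_mat N (L ! i)" "U\<^sup>T * U = 1\<^sub>m (L ! i)" "U * U\<^sup>T = Ps ! i"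
      using orth_proj_factor[of N "Ps ! i"] by metis
    then show "\<exists>U. U \<in> carrier_mat N (L ! i) \<and> U\<^sup>T * U = 1\<^sub>m (L ! i) \<and> U * U\<^sup>T = Ps ! i"
      by blast
  qed
  then obtain U where U: "\<And>i. i < length L \<Longrightarrow> U i \<in> carrier_mat N (L ! i)"
    and isometry: "\<And>i. i < length L \<Longrightarrow> (U i)\<^sup>T * U i = 1\<^sub>m (L ! i)"
    and UUT: "\<And>i. i < length L \<Longrightarrow> U i * (U i)\<^sup>T = Ps ! i"
    unfolding choice_iff' by blast
  have "map (\<lambda>i. U i * (U i)\<^sup>T) [0..<length L] = Ps"
    using UUT len by (intro nth_equalityI) auto
  then show thesis
    using that[OF U isometry] sum by (simp add: sum_mat_list_def)
qed

lemma TFF_memI_scaled_isometries: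
  fixes X :: "nat \<Rightarrow> real mat"
  assumes L: "sorted_wrt (\<ge>) L" "\<forall>l\<in>set L. 0 < l"
    and X: "\<And>i. i < length L \<Longrightarrow> X i \<in> carrier_mat r (L ! i)"
    and XTX: "\<And>i. i < length L \<Longrightarrow> (X i)\<^sup>T * X i = d \<cdot>\<^sub>m 1\<^sub>m (L ! i)"
    and frame: "sum_mat_list r r (map (\<lambda>i. X i * (X i)\<^sup>T) [0..<length L]) = 1\<^sub>m r"
    and cd: "c * d = 1"
  shows "L \<in> TFF c r"
proof -
  let ?Qs = "map (\<lambda>i. c \<cdot>\<^sub>m (X i * (X i)\<^sup>T)) [0..<length L]"
  have "X i * (X i)\<^sup>T \<in> carrier_mat r r" if "i < length L" for i
    using X[OF that] by (intro mult_carrier_mat[of _ _ "L ! i"]) simp_all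
  then have "foldr (+) ?Qs (0\<^sub>m r r) = c \<cdot>\<^sub>m sum_mat_list r r (map (\<lambda>i. X i * (X i)\<^sup>T) [0..<length L])"
    by (subst smult_sum_mat_list) (auto simp: sum_mat_list_def o_def)
  then show ?thesis
    unfolding TFF_def using L orth_proj_smult_gram[OF X XTX cd] frame
    by (intro CollectI conjI exI[of _ ?Qs]) auto
qed

lemma TFF_subset_dual:
  assumes \<alpha>: "\<alpha> > 1" and conj: "1 / \<alpha> + 1 / \<alpha>' = 1" and N': "real N' = real N * (\<alpha> - 1)"
  shows "TFF \<alpha> N \<subseteq> TFF \<alpha>' N'"
proof
  fix L assume L: "L \<in> TFF \<alpha> N"
  obtain U where U: "\<And>i. i < length L \<Longrightarrow> U i \<in> carrier_mat N (L ! i)"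
    and isometry: "\<And>i. i < length L \<Longrightarrow> (U i)\<^sup>T * U i = 1\<^sub>m (L ! i)"
    and tight: "sum_mat_list N N (map (\<lambda>i. U i * (U i)\<^sup>T) [0..<length L]) = \<alpha> \<cdot>\<^sub>m 1\<^sub>m N"
    using TFF_isometries[OF L] by blast
  obtain r X where r: "real r = (\<alpha> - 1) * real N"
    and X: "\<And>i. i < length L \<Longrightarrow> X i \<in> carrier_mat r (L ! i)"
    and XTX: "\<And>i. i < length L \<Longrightarrow> (X i)\<^sup>T * X i = (1 - 1 / \<alpha>) \<cdot>\<^sub>m 1\<^sub>m (L ! i)"
    and frame: "sum_mat_list r r (map (\<lambda>i. X i * (X i)\<^sup>T) [0..<length L]) = 1\<^sub>m r"
    using naimark_complement[OF U isometry tight] \<alpha> by auto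
  have "r = N'"
    using r N' by (simp add: mult.commute)
  moreover have "\<alpha>' * (1 - 1 / \<alpha>) = 1"
    using conjugate_exponent[OF \<alpha> conj] \<alpha> by (simp add: field_simps)
  ultimately show "L \<in> TFF \<alpha>' N'"
    using TFF_memI_scaled_isometries[OF _ _ X XTX frame] L by (simp add: TFF_def)
qed

theorem corollary2p7:
  fixes N :: nat and \<alpha> \<alpha>' :: real and N' :: nat
  assumes "N > 0" and "\<alpha> > 1" and "\<alpha> * real N \<in> \<nat>"
    and "1 / \<alpha> + 1 / \<alpha>' = 1"
    and "real N' = real N * (\<alpha> - 1)"
  shows "TFF \<alpha> N = TFF \<alpha>' N'"
proof
  show "TFF \<alpha> N \<subseteq> TFF \<alpha>' N'"
    by (rule TFF_subset_dual[OF assms(2,4,5)])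
  have \<alpha>': "\<alpha>' > 1" and "(\<alpha> - 1) * (\<alpha>' - 1) = 1"
    using conjugate_exponent[OF assms(2,4)] by simp_all
  then have "real N = real N' * (\<alpha>' - 1)"
    using assms(5) by (simp add: mult.assoc)
  moreover have "1 / \<alpha>' + 1 / \<alpha> = 1"
    using assms(4) by simp
  ultimately show "TFF \<alpha>' N' \<subseteq> TFF \<alpha> N"
    using TFF_subset_dual[OF \<alpha>'] by blast
qed

end
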